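(* Let $\sigma\ge0$, $\delta\ge0$, $\underline\gamma>0$, and let sequences $\{\gamma_j\}_{j\ge1}$, $\{\eta_j\}_{j\ge1}$, $\{\alpha_j\}_{j\ge0}$ of reals satisfy, for every $j\ge1$, $\gamma_j\ge\underline\gamma$ and $\gamma_j\eta_j\le\alpha_{j-1}-(1+\sigma)\alpha_j+\gamma_j\delta$. Then: (a) for every $k\ge1$, $\displaystyle\min_{1\le j\le k}\eta_j\le\frac{\alpha_0-(1+\sigma)^k\alpha_k}{\sum_{j=1}^k(1+\sigma)^{j-1}\gamma_j}+\delta$; (b) if $\alpha_j\ge0$ for all $j$, then $\min_{1\le j\le k}\eta_j\le2\delta$ for every $k\ge1$ such that \[ k\ge\min\left\{\frac{1+\sigma}{\sigma}\log\left(\frac{\sigma\alpha_0}{\underline\gamma\delta}+1\right),\ \frac{\alpha_0}{\underline\gamma\delta}\right\}, \] with the convention that the first term equals the second when $\sigma=0$. *)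

theory Defs
  imports Complex_Main
begin

definition iter_bound :: "real \<Rightarrow> real \<Rightarrow> real \<Rightarrow> real \<Rightarrow> real" where
  "iter_bound \<sigma> a0 gl \<delta> =
     (let first = (if \<sigma> = 0 then a0 / (gl * \<delta>)
                   else (1 + \<sigma>) / \<sigma> * ln (\<sigma> * a0 / (gl * \<delta>) + 1))
      in min first (a0 / (gl * \<delta>)))"

end

theory Submission
  imports Defs
begin

text \<open>Multiplying the j-th descent inequality by (1+sigma)^(j-1) makes the alpha-terms
  telescope; with the weights w_j = (1+sigma)^(j-1) gamma_j this bounds the weighted
  average of the eta_j, hence their minimum, which is part (a). For part (b), alpha_k \<ge> 0 lets
  us drop the last alpha-term, and the sum of the weights is at least
  gl ((1+sigma)^k - 1) / sigma (at least gl k when sigma = 0); the iteration bound makes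
  this at least alpha_0 / delta, using ln(1+sigma) \<ge> sigma / (1+sigma).\<close>

lemma mult_sum_powers_eq:
  fixes \<sigma> :: real
  shows "\<sigma> * (\<Sum>j=1..k. (1 + \<sigma>) ^ (j - 1)) = (1 + \<sigma>) ^ k - 1"
  by (induction k) (auto simp: algebra_simps)

lemma card_le_sum_powers:
  fixes \<sigma> :: real
  assumes "\<sigma> \<ge> 0"
  shows "real k \<le> (\<Sum>j=1..k. (1 + \<sigma>) ^ (j - 1))"
proof -
  have "(\<Sum>j=1..k. (1::real)) \<le> (\<Sum>j=1..k. (1 + \<sigma>) ^ (j - 1))"
    by (rule sum_mono) (simp add: assms one_le_power)
  then show ?thesis by simp
qed

lemma ln_one_plus_ge_divide:
  fixes x :: real
  assumes "x > -1"
  shows "x / (1 + x) \<le> ln (1 + x)"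
proof -
  have "ln (1 / (1 + x)) \<le> 1 / (1 + x) - 1"
    using assms by (intro ln_le_minus_one) simp
  then show ?thesis
    using assms by (simp add: ln_div field_simps)
qed

lemma Min_image_mult_sum_le:
  fixes f w :: "'a \<Rightarrow> real"
  assumes "finite A" and "A \<noteq> {}" and "\<And>x. x \<in> A \<Longrightarrow> w x \<ge> 0"
  shows "Min (f ` A) * sum w A \<le> (\<Sum>x\<in>A. w x * f x)"
proof -
  have "Min (f ` A) * w x \<le> w x * f x" if "x \<in> A" for x
    using assms that by (metis Min_le finite_imageI image_eqI mult.commute mult_left_mono)
  then show ?thesis
    unfolding sum_distrib_left by (rule sum_mono)
qed

lemma weighted_descent_telescopes:
  fixes \<sigma> \<delta> :: real and \<gamma> \<eta> \<alpha> :: "nat \<Rightarrow> real"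
  assumes "\<sigma> \<ge> 0"
    and "\<And>j. j \<ge> 1 \<Longrightarrow> \<gamma> j * \<eta> j \<le> \<alpha> (j - 1) - (1 + \<sigma>) * \<alpha> j + \<gamma> j * \<delta>"
  shows "(\<Sum>j=1..k. (1 + \<sigma>) ^ (j - 1) * \<gamma> j * \<eta> j)
           \<le> \<alpha> 0 - (1 + \<sigma>) ^ k * \<alpha> k + \<delta> * (\<Sum>j=1..k. (1 + \<sigma>) ^ (j - 1) * \<gamma> j)"
proof (induction k)
  case 0
  then show ?case by simp
next
  case (Suc k)
  have "(1 + \<sigma>) ^ k * (\<gamma> (Suc k) * \<eta> (Suc k))
          \<le> (1 + \<sigma>) ^ k * (\<alpha> k - (1 + \<sigma>) * \<alpha> (Suc k) + \<gamma> (Suc k) * \<delta>)"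
    using assms(1) assms(2)[of "Suc k"] by (intro mult_left_mono) auto
  with Suc.IH show ?case by (simp add: algebra_simps)
qed

lemma Min_le_descent_rate:
  fixes \<sigma> \<delta> :: real and \<gamma> \<eta> \<alpha> :: "nat \<Rightarrow> real"
  assumes "\<sigma> \<ge> 0" and "k \<ge> 1"
    and "\<And>j. j \<ge> 1 \<Longrightarrow> \<gamma> j > 0"
    and "\<And>j. j \<ge> 1 \<Longrightarrow> \<gamma> j * \<eta> j \<le> \<alpha> (j - 1) - (1 + \<sigma>) * \<alpha> j + \<gamma> j * \<delta>"
  shows "Min (\<eta> ` {1..k}) \<le>
           (\<alpha> 0 - (1 + \<sigma>) ^ k * \<alpha> k) / (\<Sum>j=1..k. (1 + \<sigma>) ^ (j - 1) * \<gamma> j) + \<delta>"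
proof -
  define S where "S = (\<Sum>j=1..k. (1 + \<sigma>) ^ (j - 1) * \<gamma> j)"
  have "S > 0"
    unfolding S_def using assms(1-3) by (intro sum_pos) auto
  have "Min (\<eta> ` {1..k}) * S \<le> (\<Sum>j=1..k. (1 + \<sigma>) ^ (j - 1) * \<gamma> j * \<eta> j)"
    unfolding S_def using assms(1,2,3)
    by (intro Min_image_mult_sum_le) (auto simp: less_imp_le)
  also have "\<dots> \<le> \<alpha> 0 - (1 + \<sigma>) ^ k * \<alpha> k + \<delta> * S"
    unfolding S_def using assms(1,4) by (rule weighted_descent_telescopes)
  finally show ?thesis
    using \<open>S > 0\<close> unfolding S_def[symmetric] by (simp add: field_simps)
qed

lemma gl_mult_sum_powers_le:
  fixes \<sigma> gl :: real and \<gamma> :: "nat \<Rightarrow> real"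
  assumes "\<sigma> \<ge> 0" and "\<And>j. j \<ge> 1 \<Longrightarrow> \<gamma> j \<ge> gl"
  shows "gl * (\<Sum>j=1..k. (1 + \<sigma>) ^ (j - 1)) \<le> (\<Sum>j=1..k. (1 + \<sigma>) ^ (j - 1) * \<gamma> j)"
  unfolding sum_distrib_left
  using assms by (intro sum_mono) (simp add: mult.commute mult_left_mono)

lemma one_plus_mult_le_power_of_log_bound:
  fixes \<sigma> q :: real
  assumes "\<sigma> > 0" and "q \<ge> 0" and "(1 + \<sigma>) / \<sigma> * ln (\<sigma> * q + 1) \<le> real k"
  shows "\<sigma> * q + 1 \<le> (1 + \<sigma>) ^ k"
proof -
  have "ln (\<sigma> * q + 1) \<le> real k * (\<sigma> / (1 + \<sigma>))"
    using assms(1,3) by (simp add: field_simps)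
  also have "\<dots> \<le> real k * ln (1 + \<sigma>)"
    using assms(1) ln_one_plus_ge_divide[of \<sigma>] by (intro mult_left_mono) auto
  also have "\<dots> = ln ((1 + \<sigma>) ^ k)"
    using assms(1) by (simp add: ln_realpow)
  finally have "ln (\<sigma> * q + 1) \<le> ln ((1 + \<sigma>) ^ k)" .
  moreover have "\<sigma> * q + 1 > 0"
    using assms(1,2) by (simp add: add_nonneg_pos)
  ultimately show ?thesis
    using assms(1) by simp
qed

lemma iter_bound_le_imp_le_sum_powers:
  fixes \<sigma> a0 gl \<delta> :: real
  assumes "\<sigma> \<ge> 0" and "a0 / (gl * \<delta>) \<ge> 0" and "iter_bound \<sigma> a0 gl \<delta> \<le> real k"
  shows "a0 / (gl * \<delta>) \<le> (\<Sum>j=1..k. (1 + \<sigma>) ^ (j - 1))"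
proof (cases "a0 / (gl * \<delta>) \<le> real k")
  case True
  then show ?thesis using card_le_sum_powers[OF assms(1)] by (rule order_trans)
next
  case False
  then have "\<sigma> > 0" and "(1 + \<sigma>) / \<sigma> * ln (\<sigma> * (a0 / (gl * \<delta>)) + 1) \<le> real k"
    using assms(1,3) unfolding iter_bound_def Let_def
    by (auto split: if_splits simp: min_def)
  then have "\<sigma> * (a0 / (gl * \<delta>)) \<le> \<sigma> * (\<Sum>j=1..k. (1 + \<sigma>) ^ (j - 1))"
    using assms(2) one_plus_mult_le_power_of_log_bound mult_sum_powers_eq[of \<sigma> k]
    by fastforce
  with \<open>\<sigma> > 0\<close> show ?thesis by (metis mult_le_cancel_left_pos times_divide_eq_right)
qed

theorem lemmaA2:
  fixes \<sigma> \<delta> gl :: real and \<gamma> \<eta> \<alpha> :: "nat \<Rightarrow> real"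
  assumes "\<sigma> \<ge> 0" and "\<delta> \<ge> 0" and "gl > 0"
    and "\<And>j. j \<ge> 1 \<Longrightarrow> \<gamma> j \<ge> gl"
    and "\<And>j. j \<ge> 1 \<Longrightarrow> \<gamma> j * \<eta> j \<le> \<alpha> (j - 1) - (1 + \<sigma>) * \<alpha> j + \<gamma> j * \<delta>"
  shows "(\<forall>k\<ge>1. Min (\<eta> ` {1..k}) \<le>
            (\<alpha> 0 - (1 + \<sigma>) ^ k * \<alpha> k) / (\<Sum>j=1..k. (1 + \<sigma>) ^ (j - 1) * \<gamma> j) + \<delta>)
       \<and> ((\<forall>j. \<alpha> j \<ge> 0) \<longrightarrow>
            (\<forall>k\<ge>1. \<delta> > 0 \<longrightarrow> real k \<ge> iter_bound \<sigma> (\<alpha> 0) gl \<delta> \<longrightarrow>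
               Min (\<eta> ` {1..k}) \<le> 2 * \<delta>))"
proof -
  define S where "S k = (\<Sum>j=1..k. (1 + \<sigma>) ^ (j - 1) * \<gamma> j)" for k
  have rate: "Min (\<eta> ` {1..k}) \<le> (\<alpha> 0 - (1 + \<sigma>) ^ k * \<alpha> k) / S k + \<delta>" if "k \<ge> 1" for k
    unfolding S_def using assms(1,3,4,5) that
    by (intro Min_le_descent_rate) (auto intro: less_le_trans)
  have "Min (\<eta> ` {1..k}) \<le> 2 * \<delta>"
    if "\<forall>j. \<alpha> j \<ge> 0" and "k \<ge> 1" and "\<delta> > 0" and "iter_bound \<sigma> (\<alpha> 0) gl \<delta> \<le> real k" for k
  proof -
    have "S k > 0"
      unfolding S_def using assms(1,3,4) \<open>k \<ge> 1\<close>
      by (intro sum_pos) (auto intro!: mult_pos_pos intro: less_le_trans)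
    have "\<alpha> 0 \<le> gl * \<delta> * (\<Sum>j=1..k. (1 + \<sigma>) ^ (j - 1))"
      using iter_bound_le_imp_le_sum_powers[of \<sigma> "\<alpha> 0" gl \<delta> k] assms(1,3) that
      by (simp add: pos_divide_le_eq mult.commute)
    also have "\<dots> \<le> \<delta> * S k"
      unfolding S_def using gl_mult_sum_powers_le[OF assms(1,4)] \<open>\<delta> > 0\<close>
      by (simp add: mult.assoc mult.left_commute)
    finally have "\<alpha> 0 - (1 + \<sigma>) ^ k * \<alpha> k \<le> \<delta> * S k"
      using that(1) assms(1) by (smt (verit) mult_nonneg_nonneg zero_le_power)
    with \<open>S k > 0\<close> have "(\<alpha> 0 - (1 + \<sigma>) ^ k * \<alpha> k) / S k \<le> \<delta>"
      by (simp add: divide_le_eq mult.commute)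
    with rate[OF \<open>k \<ge> 1\<close>] show ?thesis by simp
  qed
  then show ?thesis
    using rate unfolding S_def by blast
qed

end
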